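(* Let $\theta_0=\pi/4$, $\kappa=1$, $\ell=6/5$, and for $\varepsilon\in\,]0,1[$ let $I_\varepsilon(y)=\varepsilon$ for $y\in[0,1]$ and $I_\varepsilon(y)=1$ for $y>1$. Then there exists $\hat\varepsilon\in\,]0,1[$ such that (OP1) with light intensity $I_{\hat\varepsilon}$ has (at least) two distinct optimal solutions $(h_1,\theta_1)$ and $(h_2,\theta_2)$, with $h_1<1<h_2$.
   Context: Model 1. For $\theta\in[\theta_0,\pi/2]$ define $G(\theta)=\Big(1-\exp\Big\{\frac{-\kappa}{\cos(\theta-\theta_0)}\Big\}\Big)\cos(\theta-\theta_0)$ and $g(\theta)=G(\theta)/\sin\theta$. Given a non-decreasing $I:[0,\infty)\to[0,1]$, problem (OP1) is: among all pairs $(h,\theta)$ with $h>0$, $\theta:[0,h]\to[\theta_0,\pi/2]$ measurable and $\int_0^h \frac{dy}{\sin\theta(y)}=\ell$, maximize $\int_0^h I(y)\,g(\theta(y))\,dy$. *)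

theory Defs
  imports "HOL-Analysis.Analysis"
begin

definition G1 :: "real \<Rightarrow> real \<Rightarrow> real \<Rightarrow> real" where
  "G1 \<theta>0 \<kappa> \<theta> = (1 - exp (- \<kappa> / cos (\<theta> - \<theta>0))) * cos (\<theta> - \<theta>0)"

definition g1 :: "real \<Rightarrow> real \<Rightarrow> real \<Rightarrow> real" where
  "g1 \<theta>0 \<kappa> \<theta> = G1 \<theta>0 \<kappa> \<theta> / sin \<theta>"

definition admissible1 :: "real \<Rightarrow> real \<Rightarrow> real \<Rightarrow> (real \<Rightarrow> real) \<Rightarrow> bool" where
  "admissible1 \<theta>0 ell h \<theta> \<longleftrightarrow>
     h > 0 \<and>
     set_borel_measurable lebesgue {0..h} \<theta> \<and>
     (\<forall>y\<in>{0..h}. \<theta>0 \<le> \<theta> y \<and> \<theta> y \<le> pi / 2) \<and>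
     (LINT y:{0..h}|lebesgue. 1 / sin (\<theta> y)) = ell"

definition J1 :: "(real \<Rightarrow> real) \<Rightarrow> real \<Rightarrow> real \<Rightarrow> real \<Rightarrow> (real \<Rightarrow> real) \<Rightarrow> real" where
  "J1 I \<theta>0 \<kappa> h \<theta> = (LINT y:{0..h}|lebesgue. I y * g1 \<theta>0 \<kappa> (\<theta> y))"

definition optimal_OP1 ::
  "(real \<Rightarrow> real) \<Rightarrow> real \<Rightarrow> real \<Rightarrow> real \<Rightarrow> real \<Rightarrow> (real \<Rightarrow> real) \<Rightarrow> bool" where
  "optimal_OP1 I \<theta>0 \<kappa> ell h \<theta> \<longleftrightarrow>
     admissible1 \<theta>0 ell h \<theta> \<and>
     (\<forall>h' \<theta>'. admissible1 \<theta>0 ell h' \<theta>' \<longrightarrow> J1 I \<theta>0 \<kappa> h' \<theta>' \<le> J1 I \<theta>0 \<kappa> h \<theta>)"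

definition I_step :: "real \<Rightarrow> real \<Rightarrow> real" where
  "I_step \<epsilon> y = (if y \<le> 1 then \<epsilon> else 1)"

end

theory Submission
  imports Defs
begin

(* With c0 = G(\<theta>0), the maximum of G on [\<theta>0, pi/2], the whole argument rests on a supporting
   line in the variable ell sin \<theta>: there is \<mu> > 0 with
     G(\<theta>) \<le> c0 (1 - \<mu> (ell sin \<theta> - 1))   on [\<theta>0, pi/2],
   with equality at some \<theta>1 where ell sin \<theta>1 > 1; \<mu> is the minimum of
   (c0 - G) / (c0 (ell sin \<theta> - 1)) over ell sin \<theta> > 1, which is attained because the ratio
   blows up at ell sin \<theta> = 1.  For \<epsilon> = 1 / (1 + \<mu>) this reads
   \<epsilon> g(\<theta>) \<le> c0 / sin \<theta> - (1 - \<epsilon>) c0 ell, while always g(\<theta>) \<le> c0 / sin \<theta>.  Integrating these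
   bounds against the length constraint caps every admissible value of J at \<epsilon> c0 ell.  The cap
   is reached by the constant profile \<theta>0 of height ell sin \<theta>0 < 1, and by the profile that is
   \<theta>1 on [0,1] and \<theta>0 above, whose height exceeds 1. *)

lemma attained_ratio_bound:
  fixes F D :: "'a::t2_space \<Rightarrow> real"
  assumes "compact S" "continuous_on S F" "continuous_on S D"
    and "x0 \<in> S" "0 < D x0"
    and F_nonneg: "\<And>x. x \<in> S \<Longrightarrow> 0 \<le> F x"
    and F_pos: "\<And>x. x \<in> S \<Longrightarrow> 0 \<le> D x \<Longrightarrow> 0 < F x"
  obtains \<mu> x where "0 < \<mu>" "x \<in> S" "0 < D x" "F x = \<mu> * D x"
    "\<And>y. y \<in> S \<Longrightarrow> \<mu> * D y \<le> F y"
proof -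
  define r0 where "r0 = F x0 / D x0"
  \<comment> \<open>On this sublevel set D stays positive, so F / D is continuous there.\<close>
  define C where "C = {x \<in> S. F x \<le> r0 * D x}"
  have "closed C"
    unfolding C_def using assms(1-3)
    by (intro continuous_on_closed_Collect_le compact_imp_closed continuous_intros)
  moreover have "C = S \<inter> C"
    by (auto simp: C_def)
  ultimately have "compact C"
    by (metis compact_Int_closed \<open>compact S\<close>)
  have "x0 \<in> C"
    using assms(4,5) by (simp add: C_def r0_def)
  have "0 < r0"
    using F_pos[OF \<open>x0 \<in> S\<close>] \<open>0 < D x0\<close> by (simp add: r0_def)
  have D_pos: "0 < D x" if "x \<in> C" for x
  proof -
    have "x \<in> S" "F x \<le> r0 * D x"
      using that by (auto simp: C_def)
    then have "0 \<le> r0 * D x"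
      using F_nonneg[of x] by linarith
    then have "0 \<le> D x"
      using \<open>0 < r0\<close> by (simp add: zero_le_mult_iff)
    then have "0 < r0 * D x"
      using F_pos[OF \<open>x \<in> S\<close>] \<open>F x \<le> r0 * D x\<close> by linarith
    then show ?thesis
      using \<open>0 < r0\<close> by (simp add: zero_less_mult_iff)
  qed
  have "C \<subseteq> S"
    by (auto simp: C_def)
  then have "continuous_on C (\<lambda>x. F x / D x)"
    using D_pos continuous_on_subset[OF assms(2)] continuous_on_subset[OF assms(3)]
    by (intro continuous_on_divide) (auto dest: D_pos)
  then obtain x where "x \<in> C" and x_min: "\<And>y. y \<in> C \<Longrightarrow> F x / D x \<le> F y / D y"
    using continuous_attains_inf[OF \<open>compact C\<close>] \<open>x0 \<in> C\<close> by blast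
  define \<mu> where "\<mu> = F x / D x"
  show thesis
  proof
    show "0 < \<mu>" "x \<in> S" "0 < D x" "F x = \<mu> * D x"
      using D_pos[OF \<open>x \<in> C\<close>] F_pos[of x] \<open>x \<in> C\<close> by (auto simp: C_def \<mu>_def)
    fix y assume "y \<in> S"
    show "\<mu> * D y \<le> F y"
    proof (cases "0 < D y")
      case False
      then show ?thesis
        using mult_nonneg_nonpos[of \<mu> "D y"] \<open>0 < \<mu>\<close> F_nonneg[OF \<open>y \<in> S\<close>] by linarith
    next
      case True
      have "\<mu> \<le> F y / D y"
      proof (cases "y \<in> C")
        case True
        then show ?thesis using x_min by (simp add: \<mu>_def)
      next
        case False
        then have "r0 < F y / D y"
          using \<open>y \<in> S\<close> \<open>0 < D y\<close> by (auto simp: C_def pos_less_divide_eq)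
        moreover have "\<mu> \<le> r0"
          using x_min[OF \<open>x0 \<in> C\<close>] by (simp add: \<mu>_def r0_def)
        ultimately show ?thesis by simp
      qed
      with True show ?thesis by (simp add: pos_le_divide_eq)
    qed
  qed
qed

lemma set_integrable_bounded_comp:
  fixes \<theta> f w :: "real \<Rightarrow> real"
  assumes \<theta>: "set_borel_measurable lebesgue {a..b} \<theta>"
    and f: "f \<in> borel_measurable borel" and w: "w \<in> borel_measurable borel"
    and bound: "\<And>y. y \<in> {a..b} \<Longrightarrow> \<bar>w y * f (\<theta> y)\<bar> \<le> B"
  shows "set_integrable lebesgue {a..b} (\<lambda>y. w y * f (\<theta> y))"
  unfolding set_integrable_def
proof (rule integrableI_bounded_set[where A="{a..b}" and B=B])
  let ?\<theta> = "\<lambda>y. indicator {a..b} y *\<^sub>R \<theta> y"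
  have "?\<theta> \<in> borel_measurable lebesgue"
    using \<theta> by (simp add: set_borel_measurable_def)
  then have "(\<lambda>y. f (?\<theta> y)) \<in> borel_measurable lebesgue"
    using measurable_compose[OF _ f] by blast
  moreover have "w \<in> borel_measurable lebesgue"
    using w by (simp add: measurable_completion)
  moreover have "(\<lambda>y. indicator {a..b} y *\<^sub>R (w y * f (\<theta> y))) =
      (\<lambda>y. indicator {a..b} y * (w y * f (?\<theta> y)))"
    by (auto simp: indicator_def fun_eq_iff)
  moreover have "indicator {a..b} \<in> borel_measurable lebesgue"
    by (rule borel_measurable_indicator) auto
  ultimately show "(\<lambda>y. indicator {a..b} y *\<^sub>R (w y * f (\<theta> y))) \<in> borel_measurable lebesgue"
    by (simp only:) (intro borel_measurable_times)
  show "AE y in lebesgue. y \<in> {a..b} \<longrightarrow> norm (indicator {a..b} y *\<^sub>R (w y * f (\<theta> y))) \<le> B"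
    using bound by auto
qed (auto simp: emeasure_lborel_Icc_eq)

lemma set_integral_Icc_step:
  fixes a h c d :: real
  assumes "0 \<le> a" "a \<le> h"
  shows "set_integrable lebesgue {0..h} (\<lambda>y. if y \<le> a then c else d)"
    and "(LINT y:{0..h}|lebesgue. if y \<le> a then c else d) = c * a + d * (h - a)"
proof -
  show int: "set_integrable lebesgue {0..h} (\<lambda>y. if y \<le> a then c else d)"
    using set_integrable_bounded_comp[of 0 h "\<lambda>_. 0" "\<lambda>_. 1" "\<lambda>y. if y \<le> a then c else d"
        "\<bar>c\<bar> + \<bar>d\<bar>"]
    by (auto simp: set_borel_measurable_def)
  have split: "{0..h} = {0..a} \<union> {a<..h}"
    using assms by auto
  have "(LINT y:{0..h}|lebesgue. if y \<le> a then c else d) =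
      (LINT y:{0..a}|lebesgue. if y \<le> a then c else d) + (LINT y:{a<..h}|lebesgue. if y \<le> a then c else d)"
    unfolding split by (rule set_integral_Un) (use split in \<open>auto intro: set_integrable_subset[OF int]\<close>)
  also have "\<dots> = (LINT y:{0..a}|lebesgue. c) + (LINT y:{a<..h}|lebesgue. d)"
    by (intro arg_cong2[where f="(+)"] set_lebesgue_integral_cong) auto
  also have "\<dots> = c * a + d * (h - a)"
    using assms by (simp add: set_integral_const emeasure_lborel_Icc_eq)
  finally show "(LINT y:{0..h}|lebesgue. if y \<le> a then c else d) = c * a + d * (h - a)" .
qed

lemma one_minus_exp_mult_strict_mono:
  fixes \<kappa> a b :: real
  assumes "0 < \<kappa>" "0 < a" "a < b"
  shows "(1 - exp (- \<kappa> / a)) * a < (1 - exp (- \<kappa> / b)) * b"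
proof (rule DERIV_pos_imp_increasing[OF \<open>a < b\<close>])
  fix c :: real
  assume "a \<le> c" "c \<le> b"
  then have "0 < c" using assms by linarith
  have "1 + \<kappa> / c < exp (\<kappa> / c)"
    using exp_minus_greater[of "- \<kappa> / c"] assms(1) \<open>0 < c\<close> by simp
  then have pos: "0 < 1 - exp (- \<kappa> / c) - \<kappa> / c * exp (- \<kappa> / c)"
    by (simp add: exp_minus field_simps)
  have "((\<lambda>c. (1 - exp (- \<kappa> / c)) * c) has_real_derivative
      1 - exp (- \<kappa> / c) - \<kappa> / c * exp (- \<kappa> / c)) (at c)"
    using \<open>0 < c\<close> by (auto intro!: derivative_eq_intros simp: field_simps power2_eq_square)
  with pos show "\<exists>D. ((\<lambda>c. (1 - exp (- \<kappa> / c)) * c) has_real_derivative D) (at c) \<and> 0 < D"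
    by blast
qed

lemma cos_diff_pos:
  fixes \<theta>0 \<theta> :: real
  assumes "0 < \<theta>0" "\<theta>0 \<le> \<theta>" "\<theta> \<le> pi / 2"
  shows "0 < cos (\<theta> - \<theta>0)"
  using assms by (intro cos_gt_zero_pi) linarith+

lemma G1_lt_G1_base:
  assumes "0 < \<kappa>" "0 < \<theta>0" "\<theta>0 < \<theta>" "\<theta> \<le> pi / 2"
  shows "G1 \<theta>0 \<kappa> \<theta> < G1 \<theta>0 \<kappa> \<theta>0"
proof -
  have "cos (\<theta> - \<theta>0) < cos 0"
    using assms pi_gt_zero by (intro cos_monotone_0_pi) linarith+
  then show ?thesis
    using one_minus_exp_mult_strict_mono[OF \<open>0 < \<kappa>\<close> cos_diff_pos, of \<theta>0 \<theta> 1] assms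
    by (simp add: G1_def)
qed

lemma G1_le_G1_base:
  assumes "0 < \<kappa>" "0 < \<theta>0" "\<theta>0 \<le> \<theta>" "\<theta> \<le> pi / 2"
  shows "G1 \<theta>0 \<kappa> \<theta> \<le> G1 \<theta>0 \<kappa> \<theta>0"
  using G1_lt_G1_base[of \<kappa> \<theta>0 \<theta>] assms by (cases "\<theta> = \<theta>0") auto

lemma G1_base_pos: "0 < \<kappa> \<Longrightarrow> 0 < G1 \<theta>0 \<kappa> \<theta>0"
  by (simp add: G1_def)

lemma G1_nonneg:
  assumes "0 \<le> \<kappa>" "0 < \<theta>0" "\<theta>0 \<le> \<theta>" "\<theta> \<le> pi / 2"
  shows "0 \<le> G1 \<theta>0 \<kappa> \<theta>"
  using cos_diff_pos[OF assms(2-4)] assms(1) by (simp add: G1_def)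

lemma continuous_on_G1: "0 < \<theta>0 \<Longrightarrow> continuous_on {\<theta>0..pi/2} (G1 \<theta>0 \<kappa>)"
  unfolding G1_def by (intro continuous_intros) (auto dest: cos_diff_pos)

lemma G1_supporting_line:
  assumes "0 < \<kappa>" "0 < \<theta>0" "\<theta>0 \<le> pi / 2" "1 < ell" "ell * sin \<theta>0 < 1"
  obtains \<mu> \<theta>1 where "0 < \<mu>" "\<theta>1 \<in> {\<theta>0..pi/2}" "1 < ell * sin \<theta>1"
    "G1 \<theta>0 \<kappa> \<theta>1 = G1 \<theta>0 \<kappa> \<theta>0 * (1 - \<mu> * (ell * sin \<theta>1 - 1))"
    "\<And>\<theta>. \<theta> \<in> {\<theta>0..pi/2} \<Longrightarrow> G1 \<theta>0 \<kappa> \<theta> \<le> G1 \<theta>0 \<kappa> \<theta>0 * (1 - \<mu> * (ell * sin \<theta> - 1))"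
proof -
  define c0 where "c0 = G1 \<theta>0 \<kappa> \<theta>0"
  have "0 < c0"
    using G1_base_pos[OF \<open>0 < \<kappa>\<close>] by (simp add: c0_def)
  have G1_le: "G1 \<theta>0 \<kappa> \<theta> \<le> c0" if "\<theta> \<in> {\<theta>0..pi/2}" for \<theta>
    using G1_le_G1_base[of \<kappa> \<theta>0 \<theta>] that assms by (simp add: c0_def)
  have G1_lt: "G1 \<theta>0 \<kappa> \<theta> < c0" if "\<theta> \<in> {\<theta>0..pi/2}" "1 \<le> ell * sin \<theta>" for \<theta>
  proof -
    have "\<theta> \<noteq> \<theta>0"
      using that assms(5) by auto
    then show ?thesis
      using G1_lt_G1_base[of \<kappa> \<theta>0 \<theta>] that assms by (simp add: c0_def)
  qed
  obtain \<mu> \<theta>1 where "0 < \<mu>" "\<theta>1 \<in> {\<theta>0..pi/2}" "0 < c0 * (ell * sin \<theta>1 - 1)"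
    and "c0 - G1 \<theta>0 \<kappa> \<theta>1 = \<mu> * (c0 * (ell * sin \<theta>1 - 1))"
    and "\<And>\<theta>. \<theta> \<in> {\<theta>0..pi/2} \<Longrightarrow> \<mu> * (c0 * (ell * sin \<theta> - 1)) \<le> c0 - G1 \<theta>0 \<kappa> \<theta>"
  proof (rule attained_ratio_bound[of "{\<theta>0..pi/2}" "\<lambda>\<theta>. c0 - G1 \<theta>0 \<kappa> \<theta>"
        "\<lambda>\<theta>. c0 * (ell * sin \<theta> - 1)" "pi/2"])
    show "continuous_on {\<theta>0..pi/2} (\<lambda>\<theta>. c0 - G1 \<theta>0 \<kappa> \<theta>)"
      using continuous_on_G1[OF \<open>0 < \<theta>0\<close>] by (intro continuous_intros)
    show "0 < c0 * (ell * sin (pi / 2) - 1)"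
      using \<open>0 < c0\<close> \<open>1 < ell\<close> by simp
    show "0 < c0 - G1 \<theta>0 \<kappa> \<theta>" if "\<theta> \<in> {\<theta>0..pi/2}" "0 \<le> c0 * (ell * sin \<theta> - 1)" for \<theta>
      using G1_lt[OF that(1)] that(2) \<open>0 < c0\<close> by (simp add: zero_le_mult_iff)
  qed (use assms G1_le in \<open>auto intro!: continuous_intros\<close>)
  then show thesis
    using \<open>0 < c0\<close>
    by (intro that[of \<mu> \<theta>1]) (auto simp: c0_def algebra_simps zero_less_mult_iff)
qed

lemma g1_le_G1_base_div_sin:
  assumes "0 < \<kappa>" "0 < \<theta>0" "\<theta>0 \<le> \<theta>" "\<theta> \<le> pi / 2"
  shows "g1 \<theta>0 \<kappa> \<theta> \<le> G1 \<theta>0 \<kappa> \<theta>0 * (1 / sin \<theta>)"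
  using G1_le_G1_base[OF assms] sin_gt_zero[of \<theta>] assms pi_gt_zero
  by (simp add: g1_def divide_right_mono)

lemma admissible1_integrable:
  assumes "admissible1 \<theta>0 ell h \<theta>" "0 < \<kappa>" "0 < \<theta>0" "0 \<le> \<epsilon>" "\<epsilon> \<le> 1"
  shows "set_integrable lebesgue {0..h} (\<lambda>y. 1 / sin (\<theta> y))"
    and "set_integrable lebesgue {0..h} (\<lambda>y. I_step \<epsilon> y * g1 \<theta>0 \<kappa> (\<theta> y))"
proof -
  have \<theta>: "set_borel_measurable lebesgue {0..h} \<theta>"
    and range: "\<And>y. y \<in> {0..h} \<Longrightarrow> \<theta>0 \<le> \<theta> y \<and> \<theta> y \<le> pi / 2"
    using assms(1) by (auto simp: admissible1_def)
  have inv_sin: "0 < 1 / sin (\<theta> y) \<and> 1 / sin (\<theta> y) \<le> 1 / sin \<theta>0" if "y \<in> {0..h}" for y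
    using range[OF that] sin_monotone_2pi_le[of \<theta>0 "\<theta> y"] sin_gt_zero[of \<theta>0] assms(3) pi_gt_zero
    by (auto intro!: divide_left_mono)
  show "set_integrable lebesgue {0..h} (\<lambda>y. 1 / sin (\<theta> y))"
    using set_integrable_bounded_comp[OF \<theta>, of "\<lambda>t. 1 / sin t" "\<lambda>_. 1" "1 / sin \<theta>0"] inv_sin
    by fastforce
  have "\<bar>I_step \<epsilon> y * g1 \<theta>0 \<kappa> (\<theta> y)\<bar> \<le> G1 \<theta>0 \<kappa> \<theta>0 * (1 / sin \<theta>0)" if "y \<in> {0..h}" for y
  proof -
    have "0 \<le> g1 \<theta>0 \<kappa> (\<theta> y)"
      using G1_nonneg[of \<kappa> \<theta>0 "\<theta> y"] inv_sin[OF that] range[OF that] assms(2,3)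
      by (simp add: g1_def)
    moreover have "g1 \<theta>0 \<kappa> (\<theta> y) \<le> G1 \<theta>0 \<kappa> \<theta>0 * (1 / sin \<theta>0)"
      using g1_le_G1_base_div_sin[of \<kappa> \<theta>0 "\<theta> y"] range[OF that] assms(2,3) inv_sin[OF that]
        G1_base_pos[of \<kappa> \<theta>0]
      by (smt (verit) mult_left_mono)
    moreover have "0 \<le> I_step \<epsilon> y" "I_step \<epsilon> y \<le> 1"
      using assms(4,5) by (auto simp: I_step_def)
    ultimately show ?thesis
      using mult_left_le_one_le[of "g1 \<theta>0 \<kappa> (\<theta> y)" "I_step \<epsilon> y"]
      by (simp add: abs_mult mult.commute)
  qed
  moreover have "g1 \<theta>0 \<kappa> \<in> borel_measurable borel"
    unfolding g1_def G1_def by measurable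
  moreover have "I_step \<epsilon> \<in> borel_measurable borel"
    unfolding I_step_def by measurable
  ultimately show "set_integrable lebesgue {0..h} (\<lambda>y. I_step \<epsilon> y * g1 \<theta>0 \<kappa> (\<theta> y))"
    using set_integrable_bounded_comp[OF \<theta>] by blast
qed

lemma weighted_g1_le_support:
  assumes "0 < sin \<theta>" "0 \<le> \<epsilon>" "\<epsilon> * (1 + \<mu>) = 1"
    and "G1 \<theta>0 \<kappa> \<theta> \<le> c0 * (1 - \<mu> * (ell * sin \<theta> - 1))"
  shows "\<epsilon> * g1 \<theta>0 \<kappa> \<theta> \<le> c0 * (1 / sin \<theta>) - (1 - \<epsilon>) * c0 * ell"
proof -
  have "\<epsilon> * g1 \<theta>0 \<kappa> \<theta> \<le> \<epsilon> * (c0 * (1 - \<mu> * (ell * sin \<theta> - 1)) / sin \<theta>)"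
    using assms by (simp add: g1_def divide_right_mono mult_left_mono)
  also have "\<dots> = (\<epsilon> * (1 + \<mu>)) * c0 * (1 / sin \<theta>) - (\<epsilon> * \<mu>) * c0 * ell"
    using assms(1) by (simp add: field_simps)
  also have "\<epsilon> * (1 + \<mu>) = 1"
    by fact
  also have "\<epsilon> * \<mu> = 1 - \<epsilon>"
    using assms(3) by (simp add: algebra_simps)
  finally show ?thesis
    by simp
qed

lemma J1_I_step_le:
  assumes "0 < \<kappa>" "0 < \<theta>0" "0 < \<mu>" "\<epsilon> * (1 + \<mu>) = 1"
    and support: "\<And>\<theta>. \<theta> \<in> {\<theta>0..pi/2} \<Longrightarrow>
      G1 \<theta>0 \<kappa> \<theta> \<le> G1 \<theta>0 \<kappa> \<theta>0 * (1 - \<mu> * (ell * sin \<theta> - 1))"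
    and adm: "admissible1 \<theta>0 ell h \<theta>"
  shows "J1 (I_step \<epsilon>) \<theta>0 \<kappa> h \<theta> \<le> \<epsilon> * G1 \<theta>0 \<kappa> \<theta>0 * ell"
proof -
  define c0 where "c0 = G1 \<theta>0 \<kappa> \<theta>0"
  have "\<epsilon> = 1 / (1 + \<mu>)"
    using assms(3,4) by (simp add: eq_divide_eq)
  then have "0 < \<epsilon>" "\<epsilon> < 1"
    using assms(3) by simp_all
  have range: "\<theta>0 \<le> \<theta> y" "\<theta> y \<le> pi / 2" if "y \<in> {0..h}" for y
    using adm that by (auto simp: admissible1_def)
  have length: "(LINT y:{0..h}|lebesgue. 1 / sin (\<theta> y)) = ell"
    using adm by (simp add: admissible1_def)
  have sin_pos: "0 < sin (\<theta> y)" if "y \<in> {0..h}" for y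
    using range[OF that] assms(2) pi_gt_zero by (intro sin_gt_zero) linarith+
  have int: "set_integrable lebesgue {0..h} (\<lambda>y. 1 / sin (\<theta> y))"
    "set_integrable lebesgue {0..h} (\<lambda>y. I_step \<epsilon> y * g1 \<theta>0 \<kappa> (\<theta> y))"
    using \<open>0 < \<epsilon>\<close> \<open>\<epsilon> < 1\<close>
    by (intro admissible1_integrable[OF adm \<open>0 < \<kappa>\<close> \<open>0 < \<theta>0\<close>, of \<epsilon>]; simp)+
  have g1_le: "g1 \<theta>0 \<kappa> (\<theta> y) \<le> c0 * (1 / sin (\<theta> y))" if "y \<in> {0..h}" for y
    using g1_le_G1_base_div_sin[OF assms(1,2) range[OF that]] by (simp add: c0_def)
  show ?thesis
  proof (cases "h \<le> 1")
    case True
    have "J1 (I_step \<epsilon>) \<theta>0 \<kappa> h \<theta> \<le> (LINT y:{0..h}|lebesgue. \<epsilon> * c0 * (1 / sin (\<theta> y)))"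
      unfolding J1_def
    proof (rule set_integral_mono)
      fix y assume "y \<in> {0..h}"
      then show "I_step \<epsilon> y * g1 \<theta>0 \<kappa> (\<theta> y) \<le> \<epsilon> * c0 * (1 / sin (\<theta> y))"
        using True mult_left_mono[OF g1_le, of y \<epsilon>] \<open>0 < \<epsilon>\<close> by (simp add: I_step_def)
    qed (use int set_integrable_mult_right[OF int(1), of "\<epsilon> * c0"] in auto)
    also have "\<dots> = \<epsilon> * c0 * ell"
      by (simp only: set_integral_mult_right length)
    finally show ?thesis by (simp add: c0_def)
  next
    case False
    have step: "set_integrable lebesgue {0..h} (\<lambda>y. if y \<le> 1 then 1 else 0 :: real)"
      "(LINT y:{0..h}|lebesgue. if y \<le> 1 then 1 else 0 :: real) = 1"
      using set_integral_Icc_step[of 1 h 1 0] False by auto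
    have majorant_int: "set_integrable lebesgue {0..h}
        (\<lambda>y. c0 * (1 / sin (\<theta> y)) - (1 - \<epsilon>) * c0 * ell * (if y \<le> 1 then 1 else 0))"
      using set_integrable_mult_right[OF int(1), of c0]
        set_integrable_mult_right[OF step(1), of "(1 - \<epsilon>) * c0 * ell"]
      by (rule set_integral_diff(1))
    have "J1 (I_step \<epsilon>) \<theta>0 \<kappa> h \<theta> \<le> (LINT y:{0..h}|lebesgue.
        c0 * (1 / sin (\<theta> y)) - (1 - \<epsilon>) * c0 * ell * (if y \<le> 1 then 1 else 0))"
      unfolding J1_def
    proof (rule set_integral_mono)
      fix y assume "y \<in> {0..h}"
      then show "I_step \<epsilon> y * g1 \<theta>0 \<kappa> (\<theta> y) \<le>
          c0 * (1 / sin (\<theta> y)) - (1 - \<epsilon>) * c0 * ell * (if y \<le> 1 then 1 else 0)"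
        using weighted_g1_le_support[OF sin_pos _ assms(4) support] \<open>0 < \<epsilon>\<close> g1_le range
        by (auto simp: I_step_def c0_def)
    qed (use int majorant_int in auto)
    also have "\<dots> = c0 * ell - (1 - \<epsilon>) * c0 * ell"
      using set_integrable_mult_right[OF int(1), of c0]
        set_integrable_mult_right[OF step(1), of "(1 - \<epsilon>) * c0 * ell"]
      by (simp only: set_integral_diff(2) set_integral_mult_right length step(2) mult_1_right)
    finally show ?thesis by (simp add: c0_def algebra_simps)
  qed
qed

lemma constant_profile_J1:
  assumes "0 < \<theta>0" "\<theta>0 \<le> pi / 2" "0 < ell" "ell * sin \<theta>0 \<le> 1"
  shows "admissible1 \<theta>0 ell (ell * sin \<theta>0) (\<lambda>_. \<theta>0)"
    and "J1 (I_step \<epsilon>) \<theta>0 \<kappa> (ell * sin \<theta>0) (\<lambda>_. \<theta>0) = \<epsilon> * G1 \<theta>0 \<kappa> \<theta>0 * ell"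
proof -
  let ?h = "ell * sin \<theta>0"
  have "0 < sin \<theta>0"
    using assms(1,2) pi_gt_zero by (intro sin_gt_zero) linarith+
  then have "0 < ?h"
    using assms(3) by simp
  have const: "(LINT y:{0..?h}|lebesgue. c) = c * ?h" for c :: real
    using \<open>0 < ?h\<close> by (simp add: set_integral_const)
  have "set_borel_measurable lebesgue {0..?h} (\<lambda>_. \<theta>0)"
    unfolding set_borel_measurable_def by (rule measurable_completion) measurable
  then show "admissible1 \<theta>0 ell ?h (\<lambda>_. \<theta>0)"
    using \<open>0 < ?h\<close> \<open>0 < sin \<theta>0\<close> assms(2) by (auto simp: admissible1_def const)
  have "J1 (I_step \<epsilon>) \<theta>0 \<kappa> ?h (\<lambda>_. \<theta>0) = (LINT y:{0..?h}|lebesgue. \<epsilon> * g1 \<theta>0 \<kappa> \<theta>0)"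
    unfolding J1_def using assms(4) by (intro set_lebesgue_integral_cong) (auto simp: I_step_def)
  also have "\<dots> = \<epsilon> * G1 \<theta>0 \<kappa> \<theta>0 * ell"
    using \<open>0 < sin \<theta>0\<close> by (simp add: const g1_def)
  finally show "J1 (I_step \<epsilon>) \<theta>0 \<kappa> ?h (\<lambda>_. \<theta>0) = \<epsilon> * G1 \<theta>0 \<kappa> \<theta>0 * ell" .
qed

lemma broken_profile_J1:
  assumes "0 < \<theta>0" "\<theta>0 \<le> \<theta>1" "\<theta>1 \<le> pi / 2" "1 < ell * sin \<theta>1" "\<epsilon> * (1 + \<mu>) = 1"
    and "G1 \<theta>0 \<kappa> \<theta>1 = G1 \<theta>0 \<kappa> \<theta>0 * (1 - \<mu> * (ell * sin \<theta>1 - 1))"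
  defines "h \<equiv> 1 + (ell - 1 / sin \<theta>1) * sin \<theta>0"
  shows "1 < h"
    and "admissible1 \<theta>0 ell h (\<lambda>y. if y \<le> 1 then \<theta>1 else \<theta>0)"
    and "J1 (I_step \<epsilon>) \<theta>0 \<kappa> h (\<lambda>y. if y \<le> 1 then \<theta>1 else \<theta>0) = \<epsilon> * G1 \<theta>0 \<kappa> \<theta>0 * ell"
proof -
  let ?\<theta> = "\<lambda>y::real. if y \<le> 1 then \<theta>1 else \<theta>0"
  have "0 < sin \<theta>0" "0 < sin \<theta>1"
    using assms(1-3) pi_gt_zero by (auto intro!: sin_gt_zero)
  moreover have "1 / sin \<theta>1 < ell"
    using assms(4) \<open>0 < sin \<theta>1\<close> by (simp add: divide_less_eq mult.commute)
  ultimately show "1 < h"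
    by (simp add: h_def)
  note step = set_integral_Icc_step[OF zero_le_one less_imp_le[OF \<open>1 < h\<close>]]
  have "(LINT y:{0..h}|lebesgue. 1 / sin (?\<theta> y)) = 1 / sin \<theta>1 + 1 / sin \<theta>0 * (h - 1)"
    using step(2)[of "1 / sin \<theta>1" "1 / sin \<theta>0"] by (simp add: if_distrib)
  also have "\<dots> = ell"
    using \<open>0 < sin \<theta>0\<close> by (simp add: h_def)
  moreover have "set_borel_measurable lebesgue {0..h} ?\<theta>"
    unfolding set_borel_measurable_def by (rule measurable_completion) measurable
  ultimately show "admissible1 \<theta>0 ell h ?\<theta>"
    using \<open>1 < h\<close> assms(1-3) by (auto simp: admissible1_def)
  have "(\<lambda>y. I_step \<epsilon> y * g1 \<theta>0 \<kappa> (?\<theta> y)) =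
      (\<lambda>y. if y \<le> 1 then \<epsilon> * g1 \<theta>0 \<kappa> \<theta>1 else g1 \<theta>0 \<kappa> \<theta>0)"
    by (simp add: I_step_def fun_eq_iff)
  then have "J1 (I_step \<epsilon>) \<theta>0 \<kappa> h ?\<theta> = \<epsilon> * g1 \<theta>0 \<kappa> \<theta>1 + g1 \<theta>0 \<kappa> \<theta>0 * (h - 1)"
    unfolding J1_def by (simp only: step(2))
  also have "\<dots> = (\<epsilon> * (1 + \<mu>)) * G1 \<theta>0 \<kappa> \<theta>0 / sin \<theta>1 - (\<epsilon> * \<mu>) * G1 \<theta>0 \<kappa> \<theta>0 * ell
      + G1 \<theta>0 \<kappa> \<theta>0 * ell - G1 \<theta>0 \<kappa> \<theta>0 / sin \<theta>1"
    using \<open>0 < sin \<theta>0\<close> \<open>0 < sin \<theta>1\<close> by (simp add: g1_def h_def assms(6) field_simps)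
  also have "\<epsilon> * (1 + \<mu>) = 1"
    by fact
  also have "\<epsilon> * \<mu> = 1 - \<epsilon>"
    using assms(5) by (simp add: algebra_simps)
  finally show "J1 (I_step \<epsilon>) \<theta>0 \<kappa> h ?\<theta> = \<epsilon> * G1 \<theta>0 \<kappa> \<theta>0 * ell"
    by (simp add: algebra_simps)
qed

theorem OP1_step_intensity_two_optima:
  assumes "0 < \<kappa>" "0 < \<theta>0" "\<theta>0 \<le> pi / 2" "1 < ell" "ell * sin \<theta>0 < 1"
  shows "\<exists>\<epsilon>\<in>{0<..<1::real}. \<exists>h1 \<theta>1 h2 \<theta>2.
           optimal_OP1 (I_step \<epsilon>) \<theta>0 \<kappa> ell h1 \<theta>1 \<and>
           optimal_OP1 (I_step \<epsilon>) \<theta>0 \<kappa> ell h2 \<theta>2 \<and>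
           (h1, \<theta>1) \<noteq> (h2, \<theta>2) \<and> h1 < 1 \<and> 1 < h2"
proof -
  obtain \<mu> \<theta>1 where "0 < \<mu>" "\<theta>1 \<in> {\<theta>0..pi/2}" "1 < ell * sin \<theta>1"
    and touch: "G1 \<theta>0 \<kappa> \<theta>1 = G1 \<theta>0 \<kappa> \<theta>0 * (1 - \<mu> * (ell * sin \<theta>1 - 1))"
    and support: "\<And>\<theta>. \<theta> \<in> {\<theta>0..pi/2} \<Longrightarrow>
      G1 \<theta>0 \<kappa> \<theta> \<le> G1 \<theta>0 \<kappa> \<theta>0 * (1 - \<mu> * (ell * sin \<theta> - 1))"
    using G1_supporting_line[OF assms] by blast
  define \<epsilon> where "\<epsilon> = 1 / (1 + \<mu>)"
  have "\<epsilon> * (1 + \<mu>) = 1" "\<epsilon> \<in> {0<..<1}"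
    using \<open>0 < \<mu>\<close> by (auto simp: \<epsilon>_def)
  have optimal: "optimal_OP1 (I_step \<epsilon>) \<theta>0 \<kappa> ell h \<theta>"
    if "admissible1 \<theta>0 ell h \<theta>" "J1 (I_step \<epsilon>) \<theta>0 \<kappa> h \<theta> = \<epsilon> * G1 \<theta>0 \<kappa> \<theta>0 * ell" for h \<theta>
    using that J1_I_step_le[OF assms(1,2) \<open>0 < \<mu>\<close> \<open>\<epsilon> * (1 + \<mu>) = 1\<close> support]
    by (auto simp: optimal_OP1_def)
  have "0 < ell"
    using assms(4) by simp
  note uniform = constant_profile_J1[OF assms(2,3) \<open>0 < ell\<close> less_imp_le[OF assms(5)]]
  note broken = broken_profile_J1[OF assms(2) _ _ \<open>1 < ell * sin \<theta>1\<close> \<open>\<epsilon> * (1 + \<mu>) = 1\<close> touch]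
  show ?thesis
    using \<open>\<epsilon> \<in> {0<..<1}\<close> optimal[OF uniform] optimal[OF broken(2,3)] broken(1)
      \<open>\<theta>1 \<in> {\<theta>0..pi/2}\<close> assms(4,5)
    by fastforce
qed

theorem mainTheorem4:
  shows "\<exists>\<epsilon>\<in>{0<..<1::real}. \<exists>h1 \<theta>1 h2 \<theta>2.
           optimal_OP1 (I_step \<epsilon>) (pi/4) 1 (6/5) h1 \<theta>1 \<and>
           optimal_OP1 (I_step \<epsilon>) (pi/4) 1 (6/5) h2 \<theta>2 \<and>
           (h1, \<theta>1) \<noteq> (h2, \<theta>2) \<and> h1 < 1 \<and> 1 < h2"
proof (rule OP1_step_intensity_two_optima)
  have "sqrt 2 < sqrt ((5/3)\<^sup>2)"
    by (simp add: power2_eq_square)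
  then show "6/5 * sin (pi/4) < 1"
    by (simp add: sin_45)
qed simp_all

end
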